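(* Let $\mathcal{P}$ be a pointsymmetric convex polyhedron with radius $1$ and $\widetilde{\mathcal{P}}$ a $\kappa$-rational approximation of it; let $\widetilde S\in\widetilde{\mathcal{P}}$. Let $\varepsilon>0$, $\bar\theta_1,\bar\varphi_1,\bar\theta_2,\bar\varphi_2,\bar\alpha\in\mathbb{Q}\cap[-4,4]$, and $w\in\mathbb{Q}^2$ a unit vector. Write $\overline{M_k}=M_{\mathbb{Q}}(\bar\theta_k,\bar\varphi_k)$, $\overline{M_k}^\theta=M^\theta_{\mathbb{Q}}(\bar\theta_k,\bar\varphi_k)$, $\overline{M_k}^\varphi=M^\varphi_{\mathbb{Q}}(\bar\theta_k,\bar\varphi_k)$ for $k=1,2$ and set \[ G^{\mathbb{Q}}=\langle R_{\mathbb{Q}}(\bar\alpha)\overline{M_1}\widetilde S,w\rangle-\varepsilon\big(|\langle R'_{\mathbb{Q}}(\bar\alpha)\overline{M_1}\widetilde S,w\rangle|+|\langle R_{\mathbb{Q}}(\bar\alpha)\overline{M_1}^\theta\widetilde S,w\rangle|+|\langle R_{\mathbb{Q}}(\bar\alpha)\overline{M_1}^\varphi\widetilde S,w\rangle|\big)-\tfrac92\varepsilon^2-4\kappa(1+3\varepsilon), \] \[ H^{\mathbb{Q}}_P=\langle\overline{M_2}P,w\rangle+\varepsilon\big(|\langle\overline{M_2}^\theta P,w\rangle|+|\langle\overline{M_2}^\varphi P,w\rangle|\big)+2\varepsilon^2+3\kappa(1+2\varepsilon). \] If $G^{\mathbb{Q}}>\max_{P\in\widetilde{\mathcal{P}}}H^{\mathbb{Q}}_P$,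 then there is no $(\theta_1,\varphi_1,\theta_2,\varphi_2,\alpha)$ with $|\theta_k-\bar\theta_k|,|\varphi_k-\bar\varphi_k|,|\alpha-\bar\alpha|\le\varepsilon$ such that $R(\alpha)M(\theta_1,\varphi_1)\mathcal{P}\subset\operatorname{int}\operatorname{conv}(M(\theta_2,\varphi_2)\mathcal{P})$.
   Context: $\kappa=10^{-10}$. $R(\alpha)=\begin{pmatrix}\cos\alpha&-\sin\alpha\\ \sin\alpha&\cos\alpha\end{pmatrix}$, $R'=\frac{d}{d\alpha}R$; $M(\theta,\varphi)=\begin{pmatrix}-\sin\theta&\cos\theta&0\\ -\cos\theta\cos\varphi&-\sin\theta\cos\varphi&\sin\varphi\end{pmatrix}$, $M^\theta=\partial_\theta M$, $M^\varphi=\partial_\varphi M$. Define $\sin_{\mathbb{Q}}(x)=\sum_{k=0}^{12}(-1)^k\frac{x^{2k+1}}{(2k+1)!}$ and $\cos_{\mathbb{Q}}(x)=\sum_{k=0}^{12}(-1)^k\frac{x^{2k}}{(2k)!}$; $R_{\mathbb{Q}},R'_{\mathbb{Q}},M_{\mathbb{Q}},M^\theta_{\mathbb{Q}},M^\varphi_{\mathbb{Q}}$ are obtained from $R,R',M,M^\theta,M^\varphi$ by replacing $\sin,\cos$ by $\sin_{\mathbb{Q}},\cos_{\mathbb{Q}}$. A polyhedron is a finite non-degenerate set of points of $\mathbb{R}^3$ in convex position; pointsymmetric means $\mathcal{P}=-\mathcal{P}$; radius $1$ means all points have norm $\le1$ with equality for some. A $\kappa$-rational approximation of $\mathcal{P}=\{P_i\}$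 is a set $\widetilde{\mathcal{P}}=\{\widetilde P_i\}\subset\mathbb{Q}^3$ with $\|P_i-\widetilde P_i\|\le\kappa$ for each $i$. *)

theory Defs
  imports "HOL-Analysis.Analysis"
begin

definition kappa :: real where "kappa = 1 / 10 ^ 10"

definition sinQ :: "real \<Rightarrow> real" where
  "sinQ x = (\<Sum>k=0..12. (-1) ^ k * x ^ (2*k+1) / fact (2*k+1))"

definition cosQ :: "real \<Rightarrow> real" where
  "cosQ x = (\<Sum>k=0..12. (-1) ^ k * x ^ (2*k) / fact (2*k))"

definition Rgen :: "(real \<Rightarrow> real) \<Rightarrow> (real \<Rightarrow> real) \<Rightarrow> real \<Rightarrow> real^2^2" where
  "Rgen s c a = vector [vector [c a, - s a], vector [s a, c a]]"

definition R'gen :: "(real \<Rightarrow> real) \<Rightarrow> (real \<Rightarrow> real) \<Rightarrow> real \<Rightarrow> real^2^2" where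
  "R'gen s c a = vector [vector [- s a, - c a], vector [c a, - s a]]"

definition Mgen :: "(real \<Rightarrow> real) \<Rightarrow> (real \<Rightarrow> real) \<Rightarrow> real \<Rightarrow> real \<Rightarrow> real^3^2" where
  "Mgen s c t p = vector [vector [- s t, c t, 0],
                          vector [- c t * c p, - s t * c p, s p]]"

text \<open>partial derivative of M in theta\<close>
definition MTgen :: "(real \<Rightarrow> real) \<Rightarrow> (real \<Rightarrow> real) \<Rightarrow> real \<Rightarrow> real \<Rightarrow> real^3^2" where
  "MTgen s c t p = vector [vector [- c t, - s t, 0],
                           vector [s t * c p, - c t * c p, 0]]"

text \<open>partial derivative of M in phi\<close>
definition MPgen :: "(real \<Rightarrow> real) \<Rightarrow> (real \<Rightarrow> real) \<Rightarrow> real \<Rightarrow> real \<Rightarrow> real^3^2" where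
  "MPgen s c t p = vector [vector [0, 0, 0],
                           vector [c t * s p, s t * s p, c p]]"

abbreviation "Rm \<equiv> Rgen sin cos"
abbreviation "Mm \<equiv> Mgen sin cos"
abbreviation "RQ \<equiv> Rgen sinQ cosQ"
abbreviation "R'Q \<equiv> R'gen sinQ cosQ"
abbreviation "MQ \<equiv> Mgen sinQ cosQ"
abbreviation "MTQ \<equiv> MTgen sinQ cosQ"
abbreviation "MPQ \<equiv> MPgen sinQ cosQ"

definition rat_vec :: "real^'n \<Rightarrow> bool" where
  "rat_vec x \<longleftrightarrow> (\<forall>i. x $ i \<in> \<rat>)"

definition polyhedron :: "(real^3) set \<Rightarrow> bool" where
  "polyhedron P \<longleftrightarrow> finite P \<and> affine hull P = UNIV \<and>
     (\<forall>p\<in>P. p \<notin> convex hull (P - {p}))"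

definition pointsymmetric :: "(real^3) set \<Rightarrow> bool" where
  "pointsymmetric P \<longleftrightarrow> uminus ` P = P"

definition radius_one :: "(real^3) set \<Rightarrow> bool" where
  "radius_one P \<longleftrightarrow> (\<forall>p\<in>P. norm p \<le> 1) \<and> (\<exists>p\<in>P. norm p = 1)"

definition kappa_rat_approx :: "(real^3) set \<Rightarrow> (real^3) set \<Rightarrow> bool" where
  "kappa_rat_approx P Q \<longleftrightarrow> (\<exists>f. Q = f ` P \<and>
      (\<forall>p\<in>P. rat_vec (f p) \<and> norm (p - f p) \<le> kappa))"

end

theory Submission
  imports Defs
begin

(* If R(\<alpha>) M(\<theta>1, \<phi>1) P lay in the interior of conv M(\<theta>2, \<phi>2) P, then the interior
   point R(\<alpha>) M(\<theta>1, \<phi>1) S, for the vertex S approximated by the given rational point,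
   would be beaten in direction w by some M(\<theta>2, \<phi>2) p with p in P.  Both sides are compared
   with the rational data by a second-order Taylor expansion of
   (\<alpha>, \<theta>, \<phi>) \<mapsto> \<langle>R(\<alpha>) M(\<theta>, \<phi>) S, w\<rangle> at the rational centre: all second derivatives are
   bounded by 1, since R, M and all their partial derivatives have orthogonal rows of norm at
   most 1.  Replacing S, p by their rational approximations and sin, cos by their degree-25
   Taylor polynomials (error below 1.2e-11 on [-4, 4]) costs at most 3\<kappa> per inner product,
   which the \<kappa>-terms of G and H absorb.  Hence G \<le> H for the approximation of p, contradicting
   G > max H. *)

section \<open>Truncated sine and cosine\<close>

lemma sum_sin_coeff_even_eq:
  "(\<Sum>m<2*n. sin_coeff m * (x::real) ^ m) = (\<Sum>k<n. (-1) ^ k * x ^ (2*k+1) / fact (2*k+1))"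
proof (induction n)
  case (Suc n)
  have "2 * Suc n = Suc (Suc (2*n))" by simp
  then show ?case using Suc by (simp add: sin_coeff_def)
qed simp

lemma sum_cos_coeff_even_eq:
  "(\<Sum>m<2*n. cos_coeff m * (x::real) ^ m) = (\<Sum>k<n. (-1) ^ k * x ^ (2*k) / fact (2*k))"
proof (induction n)
  case (Suc n)
  have "2 * Suc n = Suc (Suc (2*n))" by simp
  then show ?case using Suc by (simp add: cos_coeff_def)
qed simp

lemma sinQ_eq_Maclaurin_sum: "sinQ x = (\<Sum>m<26. sin_coeff m * x ^ m)"
proof -
  have "{0..12::nat} = {..<13}" by auto
  then show ?thesis using sum_sin_coeff_even_eq[where n=13 and x=x] by (simp add: sinQ_def)
qed

lemma cosQ_eq_Maclaurin_sum: "cosQ x = (\<Sum>m<26. cos_coeff m * x ^ m)"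
proof -
  have "{0..12::nat} = {..<13}" by auto
  then show ?thesis using sum_cos_coeff_even_eq[where n=13 and x=x] by (simp add: cosQ_def)
qed

lemma Maclaurin_remainder_26_le:
  fixes x :: real
  assumes "\<bar>x\<bar> \<le> 4"
  shows "inverse (fact 26) * \<bar>x\<bar> ^ 26 \<le> 12 / 10^12"
proof -
  have "inverse (fact 26) * \<bar>x\<bar> ^ 26 \<le> inverse (fact 26) * 4 ^ 26"
    by (intro mult_left_mono power_mono) (use assms in auto)
  also have "\<dots> \<le> 12 / 10^12"
    by (simp add: fact_numeral)
  finally show ?thesis .
qed

lemma abs_sin_minus_sinQ_le:
  assumes "\<bar>x\<bar> \<le> 4"
  shows "\<bar>sin x - sinQ x\<bar> \<le> 12 / 10^12"
  using Maclaurin_sin_bound[of x 26] Maclaurin_remainder_26_le[OF assms]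
  unfolding sinQ_eq_Maclaurin_sum by linarith

lemma abs_cos_minus_cosQ_le:
  assumes "\<bar>x\<bar> \<le> 4"
  shows "\<bar>cos x - cosQ x\<bar> \<le> 12 / 10^12"
proof -
  obtain t where t: "cos x = (\<Sum>m<26. cos_coeff m * x ^ m) + cos t / fact 26 * x ^ 26"
    using Maclaurin_cos_expansion[of x 26] by blast
  have "\<bar>cos t / fact 26 * x ^ 26\<bar> \<le> inverse (fact 26) * \<bar>x\<bar> ^ 26"
    by (simp add: abs_mult power_abs divide_inverse mult_left_le_one_le)
  then show ?thesis
    using t Maclaurin_remainder_26_le[OF assms] unfolding cosQ_eq_Maclaurin_sum by linarith
qed

lemma trig_truncation_bounds:
  assumes "\<bar>x\<bar> \<le> 4"
  shows "\<bar>sin x\<bar> \<le> 1 \<and> \<bar>cos x\<bar> \<le> 1 \<and> \<bar>sin x - sinQ x\<bar> \<le> 12 / 10^12 \<and> \<bar>cos x - cosQ x\<bar> \<le> 12 / 10^12"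
  using abs_sin_minus_sinQ_le[OF assms] abs_cos_minus_cosQ_le[OF assms] by simp

section \<open>Matrices of operator norm at most one\<close>

lemma inner_sq_add_inner_sq_le_norm_sq:
  fixes a b x :: "'a::real_inner"
  assumes "a \<bullet> b = 0" "norm a \<le> 1" "norm b \<le> 1"
  shows "(a \<bullet> x)\<^sup>2 + (b \<bullet> x)\<^sup>2 \<le> (norm x)\<^sup>2"
proof -
  define A where "A = a \<bullet> x"
  define B where "B = b \<bullet> x"
  have inners: "x \<bullet> a = A" "a \<bullet> x = A" "x \<bullet> b = B" "b \<bullet> x = B" "b \<bullet> a = 0"
    using assms(1) by (simp_all add: A_def B_def inner_commute)
  have "0 \<le> (norm (x - A *\<^sub>R a - B *\<^sub>R b))\<^sup>2"
    by simp
  also have "\<dots> = (norm x)\<^sup>2 - 2 * A\<^sup>2 - 2 * B\<^sup>2 + A\<^sup>2 * (norm a)\<^sup>2 + B\<^sup>2 * (norm b)\<^sup>2"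
    unfolding power2_norm_eq_inner
    by (simp add: inner_diff_left inner_diff_right inners assms(1) power2_eq_square algebra_simps)
  also have "\<dots> \<le> (norm x)\<^sup>2 - A\<^sup>2 - B\<^sup>2"
    using mult_left_mono[of "(norm a)\<^sup>2" 1 "A\<^sup>2"] mult_left_mono[of "(norm b)\<^sup>2" 1 "B\<^sup>2"] assms(2,3)
    by (simp add: power_le_one)
  finally show ?thesis
    unfolding A_def B_def by simp
qed

lemma norm_matrix_vector_mult_le:
  fixes A :: "real^'n^'m"
  assumes "onorm ((*v) A) \<le> 1"
  shows "norm (A *v x) \<le> norm x"
proof -
  have "norm (A *v x) \<le> onorm ((*v) A) * norm x"
    by (rule onorm[OF matrix_vector_mul_bounded_linear])
  also have "\<dots> \<le> norm x"
    using mult_right_mono[OF assms, of "norm x"] by simp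
  finally show ?thesis .
qed

lemma onorm_two_orthogonal_rows_le_1:
  fixes a b :: "real^'n"
  assumes "a \<bullet> b = 0" "norm a \<le> 1" "norm b \<le> 1"
  shows "onorm ((*v) (vector [a, b] :: real^'n^2)) \<le> 1"
proof (rule onorm_le)
  fix x :: "real^'n"
  have "(norm (vector [a, b] *v x :: real^2))\<^sup>2 = (a \<bullet> x)\<^sup>2 + (b \<bullet> x)\<^sup>2"
    by (simp add: matrix_mult_dot norm_vec_def L2_set_def sum_2)
  also have "\<dots> \<le> (norm x)\<^sup>2"
    by (rule inner_sq_add_inner_sq_le_norm_sq[OF assms])
  finally have "norm (vector [a, b] *v x :: real^2) \<le> norm x"
    by (rule power2_le_imp_le) simp
  then show "norm (vector [a, b] *v x :: real^2) \<le> 1 * norm x"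
    by simp
qed

lemma inner_vector_3 [simp]:
  "(vector [a1, a2, a3] :: real^3) \<bullet> vector [b1, b2, b3] = a1 * b1 + a2 * b2 + a3 * b3"
  by (simp add: inner_vec_def sum_3)

lemma norm_vector_3_le_1_iff:
  "norm (vector [a1, a2, a3] :: real^3) \<le> 1 \<longleftrightarrow> a1\<^sup>2 + a2\<^sup>2 + a3\<^sup>2 \<le> 1"
  by (simp add: norm_vec_def L2_set_def sum_3)

lemma inner_vector_2 [simp]:
  "(vector [a1, a2] :: real^2) \<bullet> vector [b1, b2] = a1 * b1 + a2 * b2"
  by (simp add: inner_vec_def sum_2)

lemma norm_vector_2_le_1_iff:
  "norm (vector [a1, a2] :: real^2) \<le> 1 \<longleftrightarrow> a1\<^sup>2 + a2\<^sup>2 \<le> 1"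
  by (simp add: norm_vec_def L2_set_def sum_2)

(* Second partial derivatives of Mm in \<theta> and \<phi>. *)
definition MTT :: "real \<Rightarrow> real \<Rightarrow> real^3^2" where
  "MTT t p = vector [vector [sin t, - cos t, 0], vector [cos t * cos p, sin t * cos p, 0]]"

definition MTP :: "real \<Rightarrow> real \<Rightarrow> real^3^2" where
  "MTP t p = vector [vector [0, 0, 0], vector [- sin t * sin p, cos t * sin p, 0]]"

definition MPP :: "real \<Rightarrow> real \<Rightarrow> real^3^2" where
  "MPP t p = vector [vector [0, 0, 0], vector [cos t * cos p, sin t * cos p, - sin p]]"

lemma sin_cos_squared_mult_add:
  "(sin x)\<^sup>2 * c + (cos x)\<^sup>2 * c = (c::real)" "(cos x)\<^sup>2 * c + (sin x)\<^sup>2 * c = c"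
  by (simp_all flip: distrib_right)

lemma onorm_rotation_matrices_le_1:
  "onorm ((*v) (Rm a)) \<le> 1" "onorm ((*v) (R'gen sin cos a)) \<le> 1"
  unfolding Rgen_def R'gen_def
  by (rule onorm_two_orthogonal_rows_le_1; simp add: norm_vector_2_le_1_iff power_mult_distrib)+

lemma onorm_projection_matrices_le_1:
  "onorm ((*v) (Mm t p)) \<le> 1" "onorm ((*v) (MTgen sin cos t p)) \<le> 1"
  "onorm ((*v) (MPgen sin cos t p)) \<le> 1" "onorm ((*v) (MTT t p)) \<le> 1"
  "onorm ((*v) (MTP t p)) \<le> 1" "onorm ((*v) (MPP t p)) \<le> 1"
  unfolding Mgen_def MTgen_def MPgen_def MTT_def MTP_def MPP_def
  by (rule onorm_two_orthogonal_rows_le_1;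
      simp add: norm_vector_3_le_1_iff power_mult_distrib sin_cos_squared_mult_add abs_square_le_1)+

section \<open>Second-order Taylor bound\<close>

lemma Maclaurin_second_order_bound:
  fixes f f' f'' :: "real \<Rightarrow> real"
  assumes "\<And>t. (f has_real_derivative f' t) (at t)" "\<And>t. (f' has_real_derivative f'' t) (at t)"
    and "\<And>t. 0 \<le> t \<Longrightarrow> t \<le> 1 \<Longrightarrow> \<bar>f'' t\<bar> \<le> K"
  shows "\<bar>f 1 - f 0 - f' 0\<bar> \<le> K / 2"
proof -
  define diff where "diff = (\<lambda>m::nat. if m = 0 then f else if m = 1 then f' else f'')"
  have "\<exists>t. 0 < t \<and> t < 1 \<and>
      f 1 = (\<Sum>m<2. diff m 0 / fact m * 1 ^ m) + diff 2 t / fact 2 * 1 ^ 2"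
    by (rule Maclaurin) (use assms in \<open>auto simp: diff_def\<close>)
  then obtain t where "0 < t" "t < 1" "f 1 = f 0 + f' 0 + f'' t / 2"
    by (auto simp: diff_def numeral_2_eq_2)
  with assms(3)[of t] show ?thesis
    by simp
qed

lemma has_real_derivative_inner_Rm_Mm_line:
  fixes S :: "real^3" and w :: "real^2" and a t p ha ht hp :: real
  defines "\<alpha> \<equiv> \<lambda>\<tau>. a + \<tau> * ha" and "\<theta> \<equiv> \<lambda>\<tau>. t + \<tau> * ht" and "\<phi> \<equiv> \<lambda>\<tau>. p + \<tau> * hp"
  shows "((\<lambda>\<tau>. (Rm (\<alpha> \<tau>) *v (Mm (\<theta> \<tau>) (\<phi> \<tau>) *v S)) \<bullet> w) has_real_derivative
      ha * ((R'gen sin cos (\<alpha> \<tau>) *v (Mm (\<theta> \<tau>) (\<phi> \<tau>) *v S)) \<bullet> w)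
    + ht * ((Rm (\<alpha> \<tau>) *v (MTgen sin cos (\<theta> \<tau>) (\<phi> \<tau>) *v S)) \<bullet> w)
    + hp * ((Rm (\<alpha> \<tau>) *v (MPgen sin cos (\<theta> \<tau>) (\<phi> \<tau>) *v S)) \<bullet> w)) (at \<tau>)"
  unfolding assms Rgen_def R'gen_def Mgen_def MTgen_def MPgen_def
  apply (simp add: matrix_vector_mult_def inner_vec_def sum_2 sum_3)
  apply (rule derivative_eq_intros refl | simp)+
  apply (simp add: algebra_simps)
  done

lemma has_real_derivative_inner_Rm_Mm_line_deriv:
  fixes S :: "real^3" and w :: "real^2" and a t p ha ht hp :: real
  defines "\<alpha> \<equiv> \<lambda>\<tau>. a + \<tau> * ha" and "\<theta> \<equiv> \<lambda>\<tau>. t + \<tau> * ht" and "\<phi> \<equiv> \<lambda>\<tau>. p + \<tau> * hp"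
  shows "((\<lambda>\<tau>. ha * ((R'gen sin cos (\<alpha> \<tau>) *v (Mm (\<theta> \<tau>) (\<phi> \<tau>) *v S)) \<bullet> w)
      + ht * ((Rm (\<alpha> \<tau>) *v (MTgen sin cos (\<theta> \<tau>) (\<phi> \<tau>) *v S)) \<bullet> w)
      + hp * ((Rm (\<alpha> \<tau>) *v (MPgen sin cos (\<theta> \<tau>) (\<phi> \<tau>) *v S)) \<bullet> w)) has_real_derivative
      ha * ha * (- ((Rm (\<alpha> \<tau>) *v (Mm (\<theta> \<tau>) (\<phi> \<tau>) *v S)) \<bullet> w))
    + 2 * ha * ht * ((R'gen sin cos (\<alpha> \<tau>) *v (MTgen sin cos (\<theta> \<tau>) (\<phi> \<tau>) *v S)) \<bullet> w)
    + 2 * ha * hp * ((R'gen sin cos (\<alpha> \<tau>) *v (MPgen sin cos (\<theta> \<tau>) (\<phi> \<tau>) *v S)) \<bullet> w)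
    + ht * ht * ((Rm (\<alpha> \<tau>) *v (MTT (\<theta> \<tau>) (\<phi> \<tau>) *v S)) \<bullet> w)
    + 2 * ht * hp * ((Rm (\<alpha> \<tau>) *v (MTP (\<theta> \<tau>) (\<phi> \<tau>) *v S)) \<bullet> w)
    + hp * hp * ((Rm (\<alpha> \<tau>) *v (MPP (\<theta> \<tau>) (\<phi> \<tau>) *v S)) \<bullet> w)) (at \<tau>)"
  unfolding assms Rgen_def R'gen_def Mgen_def MTgen_def MPgen_def MTT_def MTP_def MPP_def
  apply (simp add: matrix_vector_mult_def inner_vec_def sum_2 sum_3)
  apply (rule derivative_eq_intros refl | simp)+
  apply (simp add: algebra_simps)
  done

lemma abs_inner_mult_mult_le_1:
  fixes A :: "real^'m^'l" and B :: "real^'n^'m"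
  assumes "onorm ((*v) A) \<le> 1" "onorm ((*v) B) \<le> 1" "norm x \<le> 1" "norm w \<le> 1"
  shows "\<bar>(A *v (B *v x)) \<bullet> w\<bar> \<le> 1"
proof -
  have "\<bar>(A *v (B *v x)) \<bullet> w\<bar> \<le> norm (A *v (B *v x)) * norm w"
    by (rule Cauchy_Schwarz_ineq2)
  also have "\<dots> \<le> 1 * 1"
    using norm_matrix_vector_mult_le[OF assms(1), of "B *v x"]
      norm_matrix_vector_mult_le[OF assms(2), of x] assms(3,4)
    by (intro mult_mono) auto
  finally show ?thesis
    by simp
qed

lemma abs_quadratic_form_le:
  fixes h1 h2 h3 c11 c12 c13 c22 c23 c33 :: real
  assumes "\<bar>c11\<bar> \<le> 1" "\<bar>c12\<bar> \<le> 1" "\<bar>c13\<bar> \<le> 1" "\<bar>c22\<bar> \<le> 1" "\<bar>c23\<bar> \<le> 1" "\<bar>c33\<bar> \<le> 1"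
  shows "\<bar>h1 * h1 * c11 + 2 * h1 * h2 * c12 + 2 * h1 * h3 * c13
           + h2 * h2 * c22 + 2 * h2 * h3 * c23 + h3 * h3 * c33\<bar> \<le> (\<bar>h1\<bar> + \<bar>h2\<bar> + \<bar>h3\<bar>)\<^sup>2"
proof -
  have weighted: "- \<bar>k\<bar> \<le> k * c \<and> k * c \<le> \<bar>k\<bar>" if "\<bar>c\<bar> \<le> 1" for k c :: real
  proof -
    have "\<bar>k * c\<bar> \<le> \<bar>k\<bar>"
      using that by (simp add: abs_mult mult_left_le)
    then show ?thesis
      by linarith
  qed
  define K where "K = \<bar>h1 * h1\<bar> + \<bar>2 * h1 * h2\<bar> + \<bar>2 * h1 * h3\<bar> + \<bar>h2 * h2\<bar> + \<bar>2 * h2 * h3\<bar> + \<bar>h3 * h3\<bar>"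
  have "(\<bar>h1\<bar> + \<bar>h2\<bar> + \<bar>h3\<bar>)\<^sup>2 = K"
    unfolding K_def by (simp add: power2_eq_square abs_mult algebra_simps)
  moreover have "\<bar>h1 * h1 * c11 + 2 * h1 * h2 * c12 + 2 * h1 * h3 * c13
           + h2 * h2 * c22 + 2 * h2 * h3 * c23 + h3 * h3 * c33\<bar> \<le> K"
    unfolding abs_le_iff K_def
    using weighted[OF assms(1), of "h1 * h1"] weighted[OF assms(2), of "2 * h1 * h2"]
      weighted[OF assms(3), of "2 * h1 * h3"] weighted[OF assms(4), of "h2 * h2"]
      weighted[OF assms(5), of "2 * h2 * h3"] weighted[OF assms(6), of "h3 * h3"]
    by linarith
  ultimately show ?thesis
    by simp
qed

lemma inner_Rm_Mm_Taylor:
  fixes S :: "real^3" and w :: "real^2"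
  assumes "norm S \<le> 1" "norm w \<le> 1"
  shows "\<bar>(Rm (a + ha) *v (Mm (t + ht) (p + hp) *v S)) \<bullet> w - (Rm a *v (Mm t p *v S)) \<bullet> w
     - (ha * ((R'gen sin cos a *v (Mm t p *v S)) \<bullet> w) + ht * ((Rm a *v (MTgen sin cos t p *v S)) \<bullet> w)
        + hp * ((Rm a *v (MPgen sin cos t p *v S)) \<bullet> w))\<bar> \<le> (\<bar>ha\<bar> + \<bar>ht\<bar> + \<bar>hp\<bar>)\<^sup>2 / 2"
proof -
  \<comment> \<open>the second derivative along the segment, at the point \<open>(a', t', p')\<close>\<close>
  have "\<bar>ha * ha * (- ((Rm a' *v (Mm t' p' *v S)) \<bullet> w))
      + 2 * ha * ht * ((R'gen sin cos a' *v (MTgen sin cos t' p' *v S)) \<bullet> w)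
      + 2 * ha * hp * ((R'gen sin cos a' *v (MPgen sin cos t' p' *v S)) \<bullet> w)
      + ht * ht * ((Rm a' *v (MTT t' p' *v S)) \<bullet> w)
      + 2 * ht * hp * ((Rm a' *v (MTP t' p' *v S)) \<bullet> w)
      + hp * hp * ((Rm a' *v (MPP t' p' *v S)) \<bullet> w)\<bar> \<le> (\<bar>ha\<bar> + \<bar>ht\<bar> + \<bar>hp\<bar>)\<^sup>2" for a' t' p'
    by (intro abs_quadratic_form_le)
      (simp_all add: abs_inner_mult_mult_le_1 assms onorm_rotation_matrices_le_1 onorm_projection_matrices_le_1)
  from Maclaurin_second_order_bound[OF has_real_derivative_inner_Rm_Mm_line
      has_real_derivative_inner_Rm_Mm_line_deriv this]
  show ?thesis
    by simp
qed

section \<open>Rational approximation errors\<close>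

lemma abs_mult_diff_le:
  fixes a b a' b' d :: real
  assumes "\<bar>a - a'\<bar> \<le> d" "\<bar>b - b'\<bar> \<le> d" "\<bar>a\<bar> \<le> 1" "\<bar>b\<bar> \<le> 1"
  shows "\<bar>a * b - a' * b'\<bar> \<le> d * (2 + d)"
proof -
  have "\<bar>a * b - a' * b'\<bar> = \<bar>(a - a') * b + a' * (b - b')\<bar>"
    by (simp add: algebra_simps)
  also have "\<dots> \<le> \<bar>a - a'\<bar> * \<bar>b\<bar> + \<bar>a'\<bar> * \<bar>b - b'\<bar>"
    by (simp add: abs_triangle_ineq flip: abs_mult)
  also have "\<dots> \<le> d * 1 + (1 + d) * d"
    using assms by (intro add_mono mult_mono) auto
  finally show ?thesis
    by (simp add: algebra_simps)
qed

lemma R'gen_eq_Rgen: "R'gen s c = Rgen c (\<lambda>x. - s x)"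
  by (simp add: fun_eq_iff R'gen_def Rgen_def)

lemma onorm_Rgen_diff_le:
  assumes "\<bar>s a - s' a\<bar> \<le> d" "\<bar>c a - c' a\<bar> \<le> d"
  shows "onorm ((*v) (Rgen s c a - Rgen s' c' a)) \<le> 4 * d"
proof (rule order_trans[OF onorm_le_matrix_component])
  fix i j :: 2
  show "\<bar>(Rgen s c a - Rgen s' c' a) $ i $ j\<bar> \<le> d"
    using exhaust_2[of i] exhaust_2[of j] assms
    by (elim disjE) (simp_all add: Rgen_def abs_minus_commute)
qed simp

lemma onorm_projection_matrix_diff_le:
  assumes "X \<in> {Mgen, MTgen, MPgen}"
    and "\<And>x. x \<in> {t, p} \<Longrightarrow> \<bar>s x\<bar> \<le> 1 \<and> \<bar>c x\<bar> \<le> 1 \<and> \<bar>s x - s' x\<bar> \<le> d \<and> \<bar>c x - c' x\<bar> \<le> d"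
  shows "onorm ((*v) (X s c t p - X s' c' t p)) \<le> 6 * (d * (2 + d))"
proof (rule order_trans[OF onorm_le_matrix_component])
  have t: "\<bar>s t\<bar> \<le> 1" "\<bar>c t\<bar> \<le> 1" "\<bar>s t - s' t\<bar> \<le> d" "\<bar>c t - c' t\<bar> \<le> d"
    and p: "\<bar>s p\<bar> \<le> 1" "\<bar>c p\<bar> \<le> 1" "\<bar>s p - s' p\<bar> \<le> d" "\<bar>c p - c' p\<bar> \<le> d"
    using assms(2) by auto
  have "d \<le> d * (2 + d)"
    using t(3) by (simp add: algebra_simps)
  then have entries: "\<bar>s t - s' t\<bar> \<le> d * (2 + d)" "\<bar>c t - c' t\<bar> \<le> d * (2 + d)"
      "\<bar>s p - s' p\<bar> \<le> d * (2 + d)" "\<bar>c p - c' p\<bar> \<le> d * (2 + d)"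
      "\<bar>s t * c p - s' t * c' p\<bar> \<le> d * (2 + d)" "\<bar>c t * c p - c' t * c' p\<bar> \<le> d * (2 + d)"
      "\<bar>c t * s p - c' t * s' p\<bar> \<le> d * (2 + d)" "\<bar>s t * s p - s' t * s' p\<bar> \<le> d * (2 + d)"
    using t p abs_mult_diff_le[OF t(3) p(4) t(1) p(2)] abs_mult_diff_le[OF t(4) p(4) t(2) p(2)]
      abs_mult_diff_le[OF t(4) p(3) t(2) p(1)] abs_mult_diff_le[OF t(3) p(3) t(1) p(1)]
    by linarith+
  fix i :: 2 and j :: 3
  show "\<bar>(X s c t p - X s' c' t p) $ i $ j\<bar> \<le> d * (2 + d)"
    using assms(1) exhaust_2[of i] exhaust_3[of j] entries
    by (elim insertE emptyE disjE) (simp_all add: Mgen_def MTgen_def MPgen_def abs_minus_commute)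
qed simp

lemma abs_inner_mult_mult_diff_le:
  fixes A A' :: "real^'m^'l" and B B' :: "real^'n^'m" and x x' :: "real^'n" and w :: "real^'l"
  assumes "onorm ((*v) A) \<le> 1" "onorm ((*v) B) \<le> 1" "norm w \<le> 1"
  defines "eA \<equiv> onorm ((*v) (A - A'))" and "eB \<equiv> onorm ((*v) (B - B'))"
  shows "\<bar>(A *v (B *v x)) \<bullet> w - (A' *v (B' *v x')) \<bullet> w\<bar> \<le> norm (x - x') + (eB + eA * (1 + eB)) * norm x'"
proof -
  have opnorm_A: "norm ((A - A') *v y) \<le> eA * norm y" and opnorm_B: "norm ((B - B') *v z) \<le> eB * norm z"
    for y z
    unfolding eA_def eB_def by (rule onorm[OF matrix_vector_mul_bounded_linear])+
  have "norm (B' *v x') \<le> norm (B *v x') + norm ((B - B') *v x')"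
    using norm_triangle_ineq4[of "B *v x'" "(B - B') *v x'"]
    by (simp add: matrix_vector_mult_diff_rdistrib)
  also have "\<dots> \<le> norm x' + eB * norm x'"
    by (intro add_mono norm_matrix_vector_mult_le assms(2) opnorm_B)
  also have "\<dots> = (1 + eB) * norm x'"
    by (simp add: algebra_simps)
  finally have B'x': "norm (B' *v x') \<le> (1 + eB) * norm x'" .
  have "A *v (B *v x) - A' *v (B' *v x') =
      A *v (B *v (x - x')) + A *v ((B - B') *v x') + (A - A') *v (B' *v x')"
    by (simp add: matrix_vector_mult_diff_distrib matrix_vector_mult_diff_rdistrib)
  also have "norm \<dots> \<le> norm (x - x') + eB * norm x' + eA * ((1 + eB) * norm x')"
  proof (intro norm_add_rule_thm)
    show "norm (A *v (B *v (x - x'))) \<le> norm (x - x')"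
      using norm_matrix_vector_mult_le[OF assms(1)] norm_matrix_vector_mult_le[OF assms(2)]
      by (rule order_trans)
    show "norm (A *v ((B - B') *v x')) \<le> eB * norm x'"
      using norm_matrix_vector_mult_le[OF assms(1)] opnorm_B by (rule order_trans)
    show "norm ((A - A') *v (B' *v x')) \<le> eA * ((1 + eB) * norm x')"
      using opnorm_A mult_left_mono[OF B'x' onorm_pos_le[OF matrix_vector_mul_bounded_linear]]
      unfolding eA_def by (rule order_trans)
  qed
  finally have "norm (A *v (B *v x) - A' *v (B' *v x')) \<le> norm (x - x') + (eB + eA * (1 + eB)) * norm x'"
    by (simp add: algebra_simps)
  moreover have "\<bar>(A *v (B *v x)) \<bullet> w - (A' *v (B' *v x')) \<bullet> w\<bar> \<le> norm (A *v (B *v x) - A' *v (B' *v x'))"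
    using Cauchy_Schwarz_ineq2[of "A *v (B *v x) - A' *v (B' *v x')" w] assms(3)
      mult_left_mono[OF assms(3), of "norm (A *v (B *v x) - A' *v (B' *v x'))"]
    by (simp add: inner_diff_left)
  ultimately show ?thesis
    by linarith
qed

lemma onorm_mat_1_le_1: "onorm ((*v) (mat 1 :: real^'n^'n)) \<le> 1"
proof -
  have "(*v) (mat 1 :: real^'n^'n) = (\<lambda>x. x)"
    by (simp add: fun_eq_iff)
  then show ?thesis
    by (simp add: onorm_id_le)
qed

lemma Rm_0_eq_mat_1: "Rm 0 = mat 1"
  by (simp add: Rgen_def vec_eq_iff forall_2 mat_def)

lemma onorm_rotation_matrices_rational_diff_le:
  assumes "\<bar>a\<bar> \<le> 4"
  shows "onorm ((*v) (Rm a - RQ a)) \<le> 4 * (12 / 10^12)"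
    and "onorm ((*v) (R'gen sin cos a - R'Q a)) \<le> 4 * (12 / 10^12)"
proof -
  note trig = trig_truncation_bounds[OF assms]
  show "onorm ((*v) (Rm a - RQ a)) \<le> 4 * (12 / 10^12)"
    using trig by (intro onorm_Rgen_diff_le) simp_all
  show "onorm ((*v) (R'gen sin cos a - R'Q a)) \<le> 4 * (12 / 10^12)"
    using trig unfolding R'gen_eq_Rgen by (intro onorm_Rgen_diff_le) (simp_all add: abs_minus_commute)
qed

lemma onorm_projection_matrix_rational_diff_le:
  assumes "X \<in> {Mgen, MTgen, MPgen}" "\<bar>t\<bar> \<le> 4" "\<bar>p\<bar> \<le> 4"
  shows "onorm ((*v) (X sin cos t p - X sinQ cosQ t p)) \<le> 6 * (12 / 10^12 * (2 + 12 / 10^12))"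
proof (rule onorm_projection_matrix_diff_le[OF assms(1)])
  fix x :: real
  assume "x \<in> {t, p}"
  then show "\<bar>sin x\<bar> \<le> 1 \<and> \<bar>cos x\<bar> \<le> 1 \<and> \<bar>sin x - sinQ x\<bar> \<le> 12 / 10^12 \<and> \<bar>cos x - cosQ x\<bar> \<le> 12 / 10^12"
    using assms(2,3) by (intro trig_truncation_bounds) auto
qed

(* 12/10^12 bounds the truncation errors of sinQ and cosQ on [-4, 4], so that the rotation
   and projection matrices are perturbed by at most the two operator norms assumed here. *)
lemma abs_inner_mult_mult_rational_error_le:
  fixes A A' :: "real^2^2" and B B' :: "real^3^2" and S S' :: "real^3" and w :: "real^2"
  assumes "onorm ((*v) A) \<le> 1" "onorm ((*v) B) \<le> 1" "norm w \<le> 1"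
    and "onorm ((*v) (A - A')) \<le> 4 * (12 / 10^12)" "onorm ((*v) (B - B')) \<le> 6 * (12 / 10^12 * (2 + 12 / 10^12))"
    and "norm S \<le> 1" "norm (S - S') \<le> kappa"
  shows "\<bar>(A *v (B *v S)) \<bullet> w - (A' *v (B' *v S')) \<bullet> w\<bar> \<le> 3 * kappa"
proof -
  define eA eB where "eA = onorm ((*v) (A - A'))" and "eB = onorm ((*v) (B - B'))"
  have "norm S' \<le> 1 + kappa"
    using norm_triangle_ineq4[of S "S - S'"] assms(6,7) by simp
  moreover have "0 \<le> eA" "0 \<le> eB"
    unfolding eA_def eB_def by (simp_all add: onorm_pos_le)
  ultimately have "(eB + eA * (1 + eB)) * norm S'
      \<le> (6 * (12 / 10^12 * (2 + 12 / 10^12)) + 4 * (12 / 10^12) * (1 + 6 * (12 / 10^12 * (2 + 12 / 10^12)))) * (1 + kappa)"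
    using assms(4,5) unfolding eA_def[symmetric] eB_def[symmetric]
    by (intro mult_mono add_mono) auto
  also have "\<dots> \<le> 2 * kappa"
    by (simp add: kappa_def)
  finally show ?thesis
    using abs_inner_mult_mult_diff_le[OF assms(1-3), where x = S and x' = S' and A' = A' and B' = B'] assms(7)
    unfolding eA_def eB_def by linarith
qed

lemma rotated_projection_rational_errors:
  fixes S S' :: "real^3" and w :: "real^2"
  assumes "\<bar>a\<bar> \<le> 4" "\<bar>t\<bar> \<le> 4" "\<bar>p\<bar> \<le> 4" "norm S \<le> 1" "norm (S - S') \<le> kappa" "norm w \<le> 1"
  shows "\<bar>(Rm a *v (Mm t p *v S)) \<bullet> w - (RQ a *v (MQ t p *v S')) \<bullet> w\<bar> \<le> 3 * kappa"
    and "\<bar>(R'gen sin cos a *v (Mm t p *v S)) \<bullet> w - (R'Q a *v (MQ t p *v S')) \<bullet> w\<bar> \<le> 3 * kappa"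
    and "\<bar>(Rm a *v (MTgen sin cos t p *v S)) \<bullet> w - (RQ a *v (MTQ t p *v S')) \<bullet> w\<bar> \<le> 3 * kappa"
    and "\<bar>(Rm a *v (MPgen sin cos t p *v S)) \<bullet> w - (RQ a *v (MPQ t p *v S')) \<bullet> w\<bar> \<le> 3 * kappa"
proof -
  note R = onorm_rotation_matrices_rational_diff_le[OF assms(1)]
    and M = onorm_projection_matrix_rational_diff_le[OF _ assms(2,3)]
    and R_le_1 = onorm_rotation_matrices_le_1 and M_le_1 = onorm_projection_matrices_le_1
  note error = abs_inner_mult_mult_rational_error_le[OF _ _ assms(6) _ _ assms(4,5)]
  show "\<bar>(Rm a *v (Mm t p *v S)) \<bullet> w - (RQ a *v (MQ t p *v S')) \<bullet> w\<bar> \<le> 3 * kappa"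
    by (rule error[OF R_le_1(1) M_le_1(1) R(1) M[of Mgen]]) simp
  show "\<bar>(R'gen sin cos a *v (Mm t p *v S)) \<bullet> w - (R'Q a *v (MQ t p *v S')) \<bullet> w\<bar> \<le> 3 * kappa"
    by (rule error[OF R_le_1(2) M_le_1(1) R(2) M[of Mgen]]) simp
  show "\<bar>(Rm a *v (MTgen sin cos t p *v S)) \<bullet> w - (RQ a *v (MTQ t p *v S')) \<bullet> w\<bar> \<le> 3 * kappa"
    by (rule error[OF R_le_1(1) M_le_1(2) R(1) M[of MTgen]]) simp
  show "\<bar>(Rm a *v (MPgen sin cos t p *v S)) \<bullet> w - (RQ a *v (MPQ t p *v S')) \<bullet> w\<bar> \<le> 3 * kappa"
    by (rule error[OF R_le_1(1) M_le_1(3) R(1) M[of MPgen]]) simp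
qed

lemma projection_rational_errors:
  fixes S S' :: "real^3" and w :: "real^2"
  assumes "\<bar>t\<bar> \<le> 4" "\<bar>p\<bar> \<le> 4" "norm S \<le> 1" "norm (S - S') \<le> kappa" "norm w \<le> 1"
  shows "\<bar>(Mm t p *v S) \<bullet> w - (MQ t p *v S') \<bullet> w\<bar> \<le> 3 * kappa"
    and "\<bar>(MTgen sin cos t p *v S) \<bullet> w - (MTQ t p *v S') \<bullet> w\<bar> \<le> 3 * kappa"
    and "\<bar>(MPgen sin cos t p *v S) \<bullet> w - (MPQ t p *v S') \<bullet> w\<bar> \<le> 3 * kappa"
proof -
  note M = onorm_projection_matrix_rational_diff_le[OF _ assms(1,2)]
    and M_le_1 = onorm_projection_matrices_le_1
  have "(*v) (mat 1 - mat 1 :: real^2^2) = (\<lambda>x. 0)"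
    by (simp add: fun_eq_iff)
  then have I: "onorm ((*v) (mat 1 - mat 1 :: real^2^2)) \<le> 4 * (12 / 10^12)"
    by (simp add: onorm_zero)
  note error = abs_inner_mult_mult_rational_error_le[OF onorm_mat_1_le_1 _ assms(5) I _ assms(3,4)]
  show "\<bar>(Mm t p *v S) \<bullet> w - (MQ t p *v S') \<bullet> w\<bar> \<le> 3 * kappa"
    using error[OF M_le_1(1) M[of Mgen]] by simp
  show "\<bar>(MTgen sin cos t p *v S) \<bullet> w - (MTQ t p *v S') \<bullet> w\<bar> \<le> 3 * kappa"
    using error[OF M_le_1(2) M[of MTgen]] by simp
  show "\<bar>(MPgen sin cos t p *v S) \<bullet> w - (MPQ t p *v S') \<bullet> w\<bar> \<le> 3 * kappa"
    using error[OF M_le_1(3) M[of MPgen]] by simp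
qed

lemma abs_diff_le_first_order_approx:
  fixes F G P T e ha hb hc Da Db Dc Pa Pb Pc :: real
  assumes "\<bar>F - G - (ha * Da + hb * Db + hc * Dc)\<bar> \<le> T"
    and "\<bar>G - P\<bar> \<le> e" "\<bar>Da - Pa\<bar> \<le> e" "\<bar>Db - Pb\<bar> \<le> e" "\<bar>Dc - Pc\<bar> \<le> e"
  shows "\<bar>F - P\<bar> \<le> T + e + \<bar>ha\<bar> * (\<bar>Pa\<bar> + e) + \<bar>hb\<bar> * (\<bar>Pb\<bar> + e) + \<bar>hc\<bar> * (\<bar>Pc\<bar> + e)"
proof -
  have weighted: "\<bar>h * D\<bar> \<le> \<bar>h\<bar> * (\<bar>Q\<bar> + e)" if "\<bar>D - Q\<bar> \<le> e" for h D Q :: real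
    unfolding abs_mult using that by (intro mult_left_mono) auto
  have "\<bar>F - P\<bar> \<le> \<bar>F - G - (ha * Da + hb * Db + hc * Dc)\<bar> + \<bar>G - P\<bar>
      + \<bar>ha * Da\<bar> + \<bar>hb * Db\<bar> + \<bar>hc * Dc\<bar>"
    by linarith
  also have "\<dots> \<le> T + e + \<bar>ha\<bar> * (\<bar>Pa\<bar> + e) + \<bar>hb\<bar> * (\<bar>Pb\<bar> + e) + \<bar>hc\<bar> * (\<bar>Pc\<bar> + e)"
    by (intro add_mono assms weighted)
  finally show ?thesis .
qed

lemma inner_Rm_Mm_rational_lower_bound:
  fixes S S' :: "real^3" and w :: "real^2"
  assumes "norm S \<le> 1" "norm (S - S') \<le> kappa" "norm w \<le> 1" "\<bar>a\<bar> \<le> 4" "\<bar>t\<bar> \<le> 4" "\<bar>p\<bar> \<le> 4"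
    and "\<bar>\<alpha> - a\<bar> \<le> \<epsilon>" "\<bar>\<theta> - t\<bar> \<le> \<epsilon>" "\<bar>\<phi> - p\<bar> \<le> \<epsilon>"
  shows "(RQ a *v (MQ t p *v S')) \<bullet> w
      - \<epsilon> * (\<bar>(R'Q a *v (MQ t p *v S')) \<bullet> w\<bar> + \<bar>(RQ a *v (MTQ t p *v S')) \<bullet> w\<bar>
        + \<bar>(RQ a *v (MPQ t p *v S')) \<bullet> w\<bar>)
      - 9/2 * \<epsilon>^2 - 4 * kappa * (1 + 3 * \<epsilon>) \<le> (Rm \<alpha> *v (Mm \<theta> \<phi> *v S)) \<bullet> w"
proof -
  define Q0 Q1 Q2 Q3 where "Q0 = (RQ a *v (MQ t p *v S')) \<bullet> w" and "Q1 = (R'Q a *v (MQ t p *v S')) \<bullet> w"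
    and "Q2 = (RQ a *v (MTQ t p *v S')) \<bullet> w" and "Q3 = (RQ a *v (MPQ t p *v S')) \<bullet> w"
  have "\<bar>(Rm \<alpha> *v (Mm \<theta> \<phi> *v S)) \<bullet> w - Q0\<bar> \<le> (\<bar>\<alpha> - a\<bar> + \<bar>\<theta> - t\<bar> + \<bar>\<phi> - p\<bar>)\<^sup>2 / 2 + 3 * kappa
      + \<bar>\<alpha> - a\<bar> * (\<bar>Q1\<bar> + 3 * kappa) + \<bar>\<theta> - t\<bar> * (\<bar>Q2\<bar> + 3 * kappa) + \<bar>\<phi> - p\<bar> * (\<bar>Q3\<bar> + 3 * kappa)"
    using abs_diff_le_first_order_approx[OF inner_Rm_Mm_Taylor[OF assms(1,3), of a "\<alpha> - a" t "\<theta> - t" p "\<phi> - p"]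
        rotated_projection_rational_errors[OF assms(4-6,1,2,3)]]
    unfolding Q0_def Q1_def Q2_def Q3_def by simp
  also have "\<dots> \<le> (3 * \<epsilon>)\<^sup>2 / 2 + 3 * kappa
      + \<epsilon> * (\<bar>Q1\<bar> + 3 * kappa) + \<epsilon> * (\<bar>Q2\<bar> + 3 * kappa) + \<epsilon> * (\<bar>Q3\<bar> + 3 * kappa)"
    using assms(7-9) by (intro add_mono mult_right_mono divide_right_mono power_mono) (auto simp: kappa_def)
  also have "\<dots> = 9/2 * \<epsilon>^2 + 3 * kappa + \<epsilon> * (\<bar>Q1\<bar> + \<bar>Q2\<bar> + \<bar>Q3\<bar>) + 9 * (\<epsilon> * kappa)"
    by (simp add: algebra_simps power2_eq_square)
  finally have "\<bar>(Rm \<alpha> *v (Mm \<theta> \<phi> *v S)) \<bullet> w - Q0\<bar>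
      \<le> 9/2 * \<epsilon>^2 + 3 * kappa + \<epsilon> * (\<bar>Q1\<bar> + \<bar>Q2\<bar> + \<bar>Q3\<bar>) + 9 * (\<epsilon> * kappa)" .
  moreover have "0 \<le> \<epsilon> * kappa" "0 \<le> kappa"
    using assms(7) by (simp_all add: kappa_def)
  moreover have "4 * kappa * (1 + 3 * \<epsilon>) = 4 * kappa + 12 * (\<epsilon> * kappa)"
    by (simp add: algebra_simps)
  ultimately show ?thesis
    unfolding Q0_def Q1_def Q2_def Q3_def by linarith
qed

lemma inner_Mm_rational_upper_bound:
  fixes S S' :: "real^3" and w :: "real^2"
  assumes "norm S \<le> 1" "norm (S - S') \<le> kappa" "norm w \<le> 1" "\<bar>t\<bar> \<le> 4" "\<bar>p\<bar> \<le> 4"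
    and "\<bar>\<theta> - t\<bar> \<le> \<epsilon>" "\<bar>\<phi> - p\<bar> \<le> \<epsilon>"
  shows "(Mm \<theta> \<phi> *v S) \<bullet> w \<le> (MQ t p *v S') \<bullet> w
      + \<epsilon> * (\<bar>(MTQ t p *v S') \<bullet> w\<bar> + \<bar>(MPQ t p *v S') \<bullet> w\<bar>) + 2 * \<epsilon>^2 + 3 * kappa * (1 + 2 * \<epsilon>)"
proof -
  define Q0 Q2 Q3 where "Q0 = (MQ t p *v S') \<bullet> w"
    and "Q2 = (MTQ t p *v S') \<bullet> w" and "Q3 = (MPQ t p *v S') \<bullet> w"
  have "\<bar>(Mm \<theta> \<phi> *v S) \<bullet> w - Q0\<bar> \<le> (\<bar>\<theta> - t\<bar> + \<bar>\<phi> - p\<bar>)\<^sup>2 / 2 + 3 * kappa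
      + \<bar>\<theta> - t\<bar> * (\<bar>Q2\<bar> + 3 * kappa) + \<bar>\<phi> - p\<bar> * (\<bar>Q3\<bar> + 3 * kappa)"
    \<comment> \<open>the rotated projection at \<open>\<alpha> = 0\<close>; its unused \<open>\<alpha>\<close>-derivative is compared with itself\<close>
    using abs_diff_le_first_order_approx[OF inner_Rm_Mm_Taylor[OF assms(1,3), of 0 0 t "\<theta> - t" p "\<phi> - p"],
        where P = Q0 and e = "3 * kappa" and Pa = "(R'gen sin cos 0 *v (Mm t p *v S)) \<bullet> w"
        and Pb = Q2 and Pc = Q3]
      projection_rational_errors[OF assms(4,5,1,2,3)]
    unfolding Q0_def Q2_def Q3_def by (simp add: Rm_0_eq_mat_1 kappa_def)
  also have "\<dots> \<le> (2 * \<epsilon>)\<^sup>2 / 2 + 3 * kappa + \<epsilon> * (\<bar>Q2\<bar> + 3 * kappa) + \<epsilon> * (\<bar>Q3\<bar> + 3 * kappa)"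
    using assms(6,7) by (intro add_mono mult_right_mono divide_right_mono power_mono) (auto simp: kappa_def)
  also have "\<dots> = 2 * \<epsilon>^2 + \<epsilon> * (\<bar>Q2\<bar> + \<bar>Q3\<bar>) + 3 * kappa * (1 + 2 * \<epsilon>)"
    by (simp add: algebra_simps power2_eq_square)
  finally show ?thesis
    unfolding Q0_def Q2_def Q3_def by linarith
qed

lemma interior_convex_hull_inner_lt:
  fixes y w :: "'a::euclidean_space"
  assumes "y \<in> interior (convex hull X)" "w \<noteq> 0"
  shows "\<exists>x\<in>X. y \<bullet> w < x \<bullet> w"
proof (rule ccontr)
  assume "\<not> (\<exists>x\<in>X. y \<bullet> w < x \<bullet> w)"
  then have "X \<subseteq> {z. w \<bullet> z \<le> w \<bullet> y}"
    by (auto simp: not_less inner_commute[of w])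
  then have "convex hull X \<subseteq> {z. w \<bullet> z \<le> w \<bullet> y}"
    by (rule hull_minimal) (rule convex_halfspace_le)
  then have "interior (convex hull X) \<subseteq> interior {z. w \<bullet> z \<le> w \<bullet> y}"
    by (rule interior_mono)
  also have "\<dots> = {z. w \<bullet> z < w \<bullet> y}"
    using assms(2) by (rule interior_halfspace_le)
  finally show False
    using assms(1) by auto
qed

theorem theorem6p7:
  fixes P Pt :: "(real^3) set" and St :: "real^3" and w :: "real^2"
    and \<epsilon> t1 p1 t2 p2 a :: real
  assumes "polyhedron P" and "pointsymmetric P" and "radius_one P"
    and "kappa_rat_approx P Pt" and "St \<in> Pt"
    and "\<epsilon> > 0"
    and "t1 \<in> \<rat>" "p1 \<in> \<rat>" "t2 \<in> \<rat>" "p2 \<in> \<rat>" "a \<in> \<rat>"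
    and "\<bar>t1\<bar> \<le> 4" "\<bar>p1\<bar> \<le> 4" "\<bar>t2\<bar> \<le> 4" "\<bar>p2\<bar> \<le> 4" "\<bar>a\<bar> \<le> 4"
    and "rat_vec w" and "norm w = 1"
    and "(RQ a *v (MQ t1 p1 *v St)) \<bullet> w
          - \<epsilon> * (\<bar>(R'Q a *v (MQ t1 p1 *v St)) \<bullet> w\<bar>
                 + \<bar>(RQ a *v (MTQ t1 p1 *v St)) \<bullet> w\<bar>
                 + \<bar>(RQ a *v (MPQ t1 p1 *v St)) \<bullet> w\<bar>)
          - 9/2 * \<epsilon>^2 - 4 * kappa * (1 + 3 * \<epsilon>)
        > Max ((\<lambda>Q. (MQ t2 p2 *v Q) \<bullet> w
               + \<epsilon> * (\<bar>(MTQ t2 p2 *v Q) \<bullet> w\<bar> + \<bar>(MPQ t2 p2 *v Q) \<bullet> w\<bar>)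
               + 2 * \<epsilon>^2 + 3 * kappa * (1 + 2 * \<epsilon>)) ` Pt)"
  shows "\<not> (\<exists>\<theta>1 \<phi>1 \<theta>2 \<phi>2 \<alpha>.
            \<bar>\<theta>1 - t1\<bar> \<le> \<epsilon> \<and> \<bar>\<phi>1 - p1\<bar> \<le> \<epsilon> \<and>
            \<bar>\<theta>2 - t2\<bar> \<le> \<epsilon> \<and> \<bar>\<phi>2 - p2\<bar> \<le> \<epsilon> \<and> \<bar>\<alpha> - a\<bar> \<le> \<epsilon> \<and>
            (\<lambda>x. Rm \<alpha> *v (Mm \<theta>1 \<phi>1 *v x)) ` P
              \<subseteq> interior (convex hull ((\<lambda>x. Mm \<theta>2 \<phi>2 *v x) ` P)))"
proof
  define H where "H = (\<lambda>Q. (MQ t2 p2 *v Q) \<bullet> w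
    + \<epsilon> * (\<bar>(MTQ t2 p2 *v Q) \<bullet> w\<bar> + \<bar>(MPQ t2 p2 *v Q) \<bullet> w\<bar>) + 2 * \<epsilon>^2 + 3 * kappa * (1 + 2 * \<epsilon>))"
  assume "\<exists>\<theta>1 \<phi>1 \<theta>2 \<phi>2 \<alpha>.
            \<bar>\<theta>1 - t1\<bar> \<le> \<epsilon> \<and> \<bar>\<phi>1 - p1\<bar> \<le> \<epsilon> \<and>
            \<bar>\<theta>2 - t2\<bar> \<le> \<epsilon> \<and> \<bar>\<phi>2 - p2\<bar> \<le> \<epsilon> \<and> \<bar>\<alpha> - a\<bar> \<le> \<epsilon> \<and>
            (\<lambda>x. Rm \<alpha> *v (Mm \<theta>1 \<phi>1 *v x)) ` P
              \<subseteq> interior (convex hull ((\<lambda>x. Mm \<theta>2 \<phi>2 *v x) ` P))"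
  then obtain \<theta>1 \<phi>1 \<theta>2 \<phi>2 \<alpha> where
    close: "\<bar>\<theta>1 - t1\<bar> \<le> \<epsilon>" "\<bar>\<phi>1 - p1\<bar> \<le> \<epsilon>" "\<bar>\<theta>2 - t2\<bar> \<le> \<epsilon>" "\<bar>\<phi>2 - p2\<bar> \<le> \<epsilon>"
      "\<bar>\<alpha> - a\<bar> \<le> \<epsilon>"
    and inside: "(\<lambda>x. Rm \<alpha> *v (Mm \<theta>1 \<phi>1 *v x)) ` P \<subseteq> interior (convex hull ((\<lambda>x. Mm \<theta>2 \<phi>2 *v x) ` P))"
    by blast
  from \<open>kappa_rat_approx P Pt\<close> obtain f where Pt: "Pt = f ` P" and f: "\<And>p. p \<in> P \<Longrightarrow> norm (p - f p) \<le> kappa"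
    unfolding kappa_rat_approx_def by blast
  with \<open>St \<in> Pt\<close> obtain S where "S \<in> P" "St = f S"
    by blast
  have norm_P: "\<And>p. p \<in> P \<Longrightarrow> norm p \<le> 1"
    using \<open>radius_one P\<close> unfolding radius_one_def by blast
  have "norm w \<le> 1" "w \<noteq> 0"
    using \<open>norm w = 1\<close> by auto
  have "Rm \<alpha> *v (Mm \<theta>1 \<phi>1 *v S) \<in> interior (convex hull ((\<lambda>x. Mm \<theta>2 \<phi>2 *v x) ` P))"
    using inside \<open>S \<in> P\<close> by blast
  from interior_convex_hull_inner_lt[OF this \<open>w \<noteq> 0\<close>]
  obtain p where "p \<in> P" and separated: "(Rm \<alpha> *v (Mm \<theta>1 \<phi>1 *v S)) \<bullet> w < (Mm \<theta>2 \<phi>2 *v p) \<bullet> w"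
    by auto
  note lower = inner_Rm_Mm_rational_lower_bound[OF norm_P[OF \<open>S \<in> P\<close>] f[OF \<open>S \<in> P\<close>] \<open>norm w \<le> 1\<close>
      assms(16,12,13) close(5,1,2)]
  have "(Mm \<theta>2 \<phi>2 *v p) \<bullet> w \<le> H (f p)"
    unfolding H_def using inner_Mm_rational_upper_bound[OF norm_P[OF \<open>p \<in> P\<close>] f[OF \<open>p \<in> P\<close>]
      \<open>norm w \<le> 1\<close> assms(14,15) close(3,4)] by simp
  also have "H (f p) \<le> Max (H ` Pt)"
    using \<open>polyhedron P\<close> \<open>p \<in> P\<close> unfolding Pt polyhedron_def by auto
  finally show False
    using separated lower assms(19) unfolding H_def \<open>St = f S\<close> by linarith
qed

end
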